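(* Let $\pi$ be a probability density on $\mathbb{R}^d$, let $0<\beta_n<\dots<\beta_1<\beta_0=1$, let $N\ge2$, and let $\pi_Q$ be the density on $(\mathbb{R}^d)^{N(n+1)}$ given by $$\pi_Q(\mathbf{x})\propto\prod_{i=1}^N\prod_{j=0}^n \pi(x_{(i,j)})^{\beta_j}.$$ Let $P_1$ be a within-temperature Markov kernel that is $\pi_Q$-invariant, and let $P_2$ be the QuanTA temperature swap kernel described in the context. Then for any integers $k,T\ge1$ the Markov chain generated by the kernel $(P_2\circ P_1^k)^T$ is $\pi_Q$-invariant.
   Context: The QuanTA swap kernel $P_2$ is the composition of two phases. Phase 1: split the components into $C_1=\{x_{(i,j)}: i\le\lfloor N/2\rfloor\}$ and $C_2=\{x_{(i,j)}: i>\lfloor N/2\rfloor\}$. From the components in $C_1$ only (e.g. via a clustering procedure followed by local optimisation of $\pi$), compute points $\mu_1,\dots,\mu_K\in\mathbb{R}^d$. For each $i>\lfloor N/2\rfloor$, sample $l$ uniformly from $\{0,\dots,n-1\}$ and propose a transformed swap between $x_{(i,l)}$ (level $\beta_l$) and $x_{(i,l+1)}$ (level $\beta_{l+1}$): with $Z(x)=\arg\min_h m(x,\mu_h)$ for a metric $m$, $g(x,\beta_a,\beta_b)=(\beta_a/\beta_b)^{1/2}(x-\mu_{Z(x)})+\mu_{Z(x)}$ and $A_{ab}=\{x: Z(g(x,\beta_a,\beta_b))=Z(x)\}$, the level-$\beta_{l+1}$ component becomes $g(x_{(i,l)},\beta_l,\beta_{l+1})$ and the level-$\beta_l$ component becomes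 $g(x_{(i,l+1)},\beta_{l+1},\beta_l)$, accepted with probability $\min\big(1,\frac{\pi(g(x_{(i,l)},\beta_l,\beta_{l+1}))^{\beta_{l+1}}\pi(g(x_{(i,l+1)},\beta_{l+1},\beta_l))^{\beta_l}}{\pi(x_{(i,l)})^{\beta_l}\pi(x_{(i,l+1)})^{\beta_{l+1}}}\mathbb{1}_{\{x_{(i,l)}\in A_{l,l+1}\}}\mathbb{1}_{\{x_{(i,l+1)}\in A_{l+1,l}\}}\big)$. Phase 2: repeat Phase 1 with the roles of $C_1$ and $C_2$ reversed. *)

theory Defs
  imports "HOL-Probability.Probability"
begin

text \<open>Configurations: components x(i,j), i in {1..N} (replica), j in {0..n} (temperature level).\<close>

definition cfg_index :: "nat \<Rightarrow> nat \<Rightarrow> (nat \<times> nat) set" where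
  "cfg_index N n = {1..N} \<times> {0..n}"

definition cfg_space :: "nat \<Rightarrow> nat \<Rightarrow> (nat \<times> nat \<Rightarrow> 'a::euclidean_space) measure" where
  "cfg_space N n = PiM (cfg_index N n) (\<lambda>_. lborel)"

definition unnorm_piQ :: "('a::euclidean_space \<Rightarrow> real) \<Rightarrow> (nat \<Rightarrow> real) \<Rightarrow> nat \<Rightarrow> nat
    \<Rightarrow> (nat \<times> nat \<Rightarrow> 'a) \<Rightarrow> real" where
  "unnorm_piQ \<pi> \<beta> N n x = (\<Prod>p\<in>cfg_index N n. \<pi> (x p) powr \<beta> (snd p))"

definition piQ :: "('a::euclidean_space \<Rightarrow> real) \<Rightarrow> (nat \<Rightarrow> real) \<Rightarrow> nat \<Rightarrow> nat
    \<Rightarrow> (nat \<times> nat \<Rightarrow> 'a) measure" where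
  "piQ \<pi> \<beta> N n = density (cfg_space N n)
     (\<lambda>x. ennreal (unnorm_piQ \<pi> \<beta> N n x) / (\<integral>\<^sup>+ y. ennreal (unnorm_piQ \<pi> \<beta> N n y) \<partial>cfg_space N n))"

definition nearest :: "('a \<Rightarrow> 'a \<Rightarrow> real) \<Rightarrow> (nat \<Rightarrow> 'a) \<Rightarrow> nat \<Rightarrow> 'a \<Rightarrow> nat" where
  "nearest m mu K x = (LEAST h. h < K \<and> (\<forall>h'<K. m x (mu h) \<le> m x (mu h')))"

definition gmap :: "('a::euclidean_space \<Rightarrow> 'a \<Rightarrow> real) \<Rightarrow> (nat \<Rightarrow> 'a) \<Rightarrow> nat \<Rightarrow> 'a \<Rightarrow> real \<Rightarrow> real \<Rightarrow> 'a" where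
  "gmap m mu K x a b = (let c = mu (nearest m mu K x) in ((a / b) powr (1/2)) *\<^sub>R (x - c) + c)"

definition inA :: "('a::euclidean_space \<Rightarrow> 'a \<Rightarrow> real) \<Rightarrow> (nat \<Rightarrow> 'a) \<Rightarrow> nat \<Rightarrow> real \<Rightarrow> real \<Rightarrow> 'a \<Rightarrow> bool" where
  "inA m mu K a b x \<longleftrightarrow> nearest m mu K (gmap m mu K x a b) = nearest m mu K x"

definition swap_prop :: "('a::euclidean_space \<Rightarrow> 'a \<Rightarrow> real) \<Rightarrow> (nat \<Rightarrow> 'a) \<Rightarrow> nat \<Rightarrow> (nat \<Rightarrow> real)
    \<Rightarrow> nat \<Rightarrow> nat \<Rightarrow> (nat \<times> nat \<Rightarrow> 'a) \<Rightarrow> (nat \<times> nat \<Rightarrow> 'a)" where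
  "swap_prop m mu K \<beta> i l x =
     x((i, Suc l) := gmap m mu K (x (i, l)) (\<beta> l) (\<beta> (Suc l)),
       (i, l) := gmap m mu K (x (i, Suc l)) (\<beta> (Suc l)) (\<beta> l))"

definition swap_acc :: "('a::euclidean_space \<Rightarrow> real) \<Rightarrow> ('a \<Rightarrow> 'a \<Rightarrow> real) \<Rightarrow> (nat \<Rightarrow> 'a) \<Rightarrow> nat
    \<Rightarrow> (nat \<Rightarrow> real) \<Rightarrow> nat \<Rightarrow> nat \<Rightarrow> (nat \<times> nat \<Rightarrow> 'a) \<Rightarrow> real" where
  "swap_acc \<pi> m mu K \<beta> i l x =
     min 1 ((\<pi> (gmap m mu K (x (i, l)) (\<beta> l) (\<beta> (Suc l))) powr \<beta> (Suc l)
             * \<pi> (gmap m mu K (x (i, Suc l)) (\<beta> (Suc l)) (\<beta> l)) powr \<beta> l)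
            / (\<pi> (x (i, l)) powr \<beta> l * \<pi> (x (i, Suc l)) powr \<beta> (Suc l))
            * (if inA m mu K (\<beta> l) (\<beta> (Suc l)) (x (i, l))
                  \<and> inA m mu K (\<beta> (Suc l)) (\<beta> l) (x (i, Suc l)) then 1 else 0))"

definition swap_row_kernel :: "('a::euclidean_space \<Rightarrow> real) \<Rightarrow> ('a \<Rightarrow> 'a \<Rightarrow> real)
    \<Rightarrow> ((nat \<times> nat \<Rightarrow> 'a) \<Rightarrow> nat \<Rightarrow> 'a) \<Rightarrow> ((nat \<times> nat \<Rightarrow> 'a) \<Rightarrow> nat)
    \<Rightarrow> (nat \<Rightarrow> real) \<Rightarrow> nat \<Rightarrow> nat \<Rightarrow> nat \<Rightarrow> (nat \<times> nat \<Rightarrow> 'a) \<Rightarrow> (nat \<times> nat \<Rightarrow> 'a) measure" where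
  "swap_row_kernel \<pi> m mufun Kfun \<beta> N n i x =
     distr (measure_pmf
       (bind_pmf (pmf_of_set {..<n}) (\<lambda>l.
          map_pmf (\<lambda>b. if b then swap_prop m (mufun x) (Kfun x) \<beta> i l x else x)
            (bernoulli_pmf (swap_acc \<pi> m (mufun x) (Kfun x) \<beta> i l x)))))
       (cfg_space N n) (\<lambda>y. y)"

fun kseq :: "'b measure \<Rightarrow> ('b \<Rightarrow> 'b measure) list \<Rightarrow> 'b \<Rightarrow> 'b measure" where
  "kseq S [] = return S"
| "kseq S (K # Ks) = (\<lambda>x. K x \<bind> kseq S Ks)"

fun kpow :: "'b measure \<Rightarrow> ('b \<Rightarrow> 'b measure) \<Rightarrow> nat \<Rightarrow> 'b \<Rightarrow> 'b measure" where
  "kpow S K 0 = return S"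
| "kpow S K (Suc j) = (\<lambda>x. kpow S K j x \<bind> K)"

definition quanta_phase where
  "quanta_phase \<pi> m mufun Kfun \<beta> N n row_list =
     kseq (cfg_space N n) (map (\<lambda>i. swap_row_kernel \<pi> m mufun Kfun \<beta> N n i) row_list)"

text \<open>P2: phase 1 (centres from C1, moves on row_list of C2), then phase 2 (roles reversed).\<close>
definition quanta_P2 where
  "quanta_P2 \<pi> m mu1 K1 mu2 K2 \<beta> N n =
     (\<lambda>x. quanta_phase \<pi> m mu1 K1 \<beta> N n [N div 2 + 1 ..< N + 1] x
          \<bind> quanta_phase \<pi> m mu2 K2 \<beta> N n [1 ..< N div 2 + 1])"

end

theory Submission
  imports Defs
begin

(*
  Invariance is preserved by composing kernels and taking powers, and P1 is invariant by
  hypothesis, so everything reduces to a single replica move of P2: pick l uniformly and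
  propose the transformed swap S of the components (i,l), (i,l+1). The centres are computed
  from the other half of the replicas, which S leaves untouched, so they are constants for
  this move. Around its nearest centre, g(.,a,b) is the dilation by (a/b)^(1/2); on the
  admissible set A_ab it keeps the nearest centre, hence maps A_ab onto A_ba and is inverted
  by g(.,b,a). So S is an involution of the admissible set, and it preserves Lebesgue measure
  there because the Jacobians (a/b)^(d/2) and (b/a)^(d/2) of the two dilations cancel. The
  acceptance probability is then the Metropolis ratio for S, which gives detailed balance
  with respect to the density of piQ, whatever its normalising constant.
*)

section \<open>Invariant kernels and Metropolis steps\<close>

definition invariant_kernel :: "'b measure \<Rightarrow> 'b measure \<Rightarrow> ('b \<Rightarrow> 'b measure) \<Rightarrow> bool" where
  "invariant_kernel Q S K \<longleftrightarrow> K \<in> S \<rightarrow>\<^sub>M subprob_algebra S \<and> Q \<bind> K = Q"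

lemma invariant_kernel_bind:
  assumes QS: "sets Q = sets S" and K: "invariant_kernel Q S K" and L: "invariant_kernel Q S L"
  shows "invariant_kernel Q S (\<lambda>x. K x \<bind> L)"
proof -
  have Km: "K \<in> S \<rightarrow>\<^sub>M subprob_algebra S" and Lm: "L \<in> S \<rightarrow>\<^sub>M subprob_algebra S"
    using K L unfolding invariant_kernel_def by auto
  then have "Q \<bind> (\<lambda>x. K x \<bind> L) = (Q \<bind> K) \<bind> L"
    by (subst bind_assoc) (simp_all add: measurable_cong_sets[OF QS refl])
  also have "\<dots> = Q"
    using K L unfolding invariant_kernel_def by simp
  finally show ?thesis
    unfolding invariant_kernel_def using measurable_bind2[OF Km Lm] by simp
qed

lemma invariant_kernel_return:
  "sets Q = sets S \<Longrightarrow> invariant_kernel Q S (return S)"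
  unfolding invariant_kernel_def by (simp add: return_measurable bind_return'')

lemma invariant_kernel_kpow:
  assumes "sets Q = sets S" and "invariant_kernel Q S K"
  shows "invariant_kernel Q S (kpow S K j)"
  by (induction j) (simp_all add: assms invariant_kernel_return invariant_kernel_bind)

lemma invariant_kernel_kseq:
  assumes "sets Q = sets S" and "\<And>K. K \<in> set Ks \<Longrightarrow> invariant_kernel Q S K"
  shows "invariant_kernel Q S (kseq S Ks)"
  using assms(2) by (induction Ks) (simp_all add: assms(1) invariant_kernel_return invariant_kernel_bind)

(* The identity need not be measurable from measure_pmf P to N, so emeasure_distr does not
   apply; but every set is measurable for measure_pmf P. *)
lemma emeasure_distr_measure_pmf_id:
  assumes A: "A \<in> sets N"
  shows "emeasure (distr (measure_pmf P) N (\<lambda>y. y)) A = emeasure (measure_pmf P) A"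
proof -
  have "emeasure (distr (measure_pmf P) N (\<lambda>y. y)) A
      = (\<lambda>A. emeasure (measure_pmf P) ((\<lambda>y. y) -` A \<inter> space (measure_pmf P))) A"
    unfolding distr_def
  proof (rule emeasure_measure_of_sigma)
    show "sigma_algebra (space N) (sets N)"
      by (rule sets.sigma_algebra_axioms)
    show "positive (sets N) (\<lambda>A. emeasure (measure_pmf P) ((\<lambda>y. y) -` A \<inter> space (measure_pmf P)))"
      by (simp add: positive_def)
    show "countably_additive (sets N) (\<lambda>A. emeasure (measure_pmf P) ((\<lambda>y. y) -` A \<inter> space (measure_pmf P)))"
      using emeasure_countably_additive[of "measure_pmf P"] by (simp add: countably_additive_def)
  qed (rule A)
  then show ?thesis by simp
qed

lemma metropolis_step_preserves_density:
  fixes S :: "'b \<Rightarrow> 'b" and acc :: "'b \<Rightarrow> real" and dens :: "'b \<Rightarrow> ennreal"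
  assumes [measurable]: "S \<in> M \<rightarrow>\<^sub>M M" "Measurable.pred M I" "acc \<in> borel_measurable M"
      "dens \<in> borel_measurable M" "A \<in> sets M"
    and acc_range: "\<And>x. 0 \<le> acc x \<and> acc x \<le> 1"
    and rejected: "\<And>x. x \<in> space M \<Longrightarrow> \<not> I x \<Longrightarrow> acc x = 0"
    and detailed_balance: "\<And>x. x \<in> space M \<Longrightarrow> I x \<Longrightarrow>
      dens (S x) * ennreal (acc (S x)) = dens x * ennreal (acc x)"
    and measure_preserving: "\<And>F. F \<in> borel_measurable M \<Longrightarrow>
      (\<integral>\<^sup>+x. indicator {x. I x} x * F (S x) \<partial>M) = (\<integral>\<^sup>+x. indicator {x. I x} x * F x \<partial>M)"
  shows "(\<integral>\<^sup>+x. dens x * (indicator A (S x) * ennreal (acc x) + indicator A x * ennreal (1 - acc x)) \<partial>M)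
       = emeasure (density M dens) A"
proof -
  define F where "F y = dens y * ennreal (acc y) * indicator A y" for y
  have "(\<integral>\<^sup>+x. dens x * ennreal (acc x) * indicator A (S x) \<partial>M)
      = (\<integral>\<^sup>+x. indicator {x. I x} x * F (S x) \<partial>M)"
    by (rule nn_integral_cong) (auto simp: F_def detailed_balance rejected split: split_indicator)
  also have "\<dots> = (\<integral>\<^sup>+x. indicator {x. I x} x * F x \<partial>M)"
    by (rule measure_preserving) (simp add: F_def)
  also have "\<dots> = (\<integral>\<^sup>+x. dens x * ennreal (acc x) * indicator A x \<partial>M)"
    by (rule nn_integral_cong) (auto simp: F_def rejected split: split_indicator)
  finally have moved: "(\<integral>\<^sup>+x. dens x * ennreal (acc x) * indicator A (S x) \<partial>M)
      = (\<integral>\<^sup>+x. dens x * ennreal (acc x) * indicator A x \<partial>M)" .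
  have stay: "ennreal (acc x) + ennreal (1 - acc x) = 1" for x
    using acc_range[of x] by (simp flip: ennreal_plus)
  have "(\<integral>\<^sup>+x. dens x * (indicator A (S x) * ennreal (acc x) + indicator A x * ennreal (1 - acc x)) \<partial>M)
      = (\<integral>\<^sup>+x. dens x * ennreal (acc x) * indicator A (S x) \<partial>M)
        + (\<integral>\<^sup>+x. dens x * ennreal (1 - acc x) * indicator A x \<partial>M)"
    by (subst nn_integral_add[symmetric]) (auto simp: distrib_left mult_ac intro!: nn_integral_cong)
  also have "\<dots> = (\<integral>\<^sup>+x. dens x * ennreal (acc x) * indicator A x
        + dens x * ennreal (1 - acc x) * indicator A x \<partial>M)"
    unfolding moved by (rule nn_integral_add[symmetric]) auto
  also have "\<dots> = (\<integral>\<^sup>+x. dens x * indicator A x \<partial>M)"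
  proof (rule nn_integral_cong)
    fix x
    have "dens x * ennreal (acc x) * indicator A x + dens x * ennreal (1 - acc x) * indicator A x
        = dens x * (ennreal (acc x) + ennreal (1 - acc x)) * indicator A x"
      by (simp add: distrib_left distrib_right)
    then show "dens x * ennreal (acc x) * indicator A x + dens x * ennreal (1 - acc x) * indicator A x
        = dens x * indicator A x"
      by (simp add: stay)
  qed
  also have "\<dots> = emeasure (density M dens) A"
    by (simp add: emeasure_density)
  finally show ?thesis .
qed

section \<open>Nearest-centre rescaling\<close>

lemma nn_integral_lborel_affine:
  fixes f :: "'a::euclidean_space \<Rightarrow> ennreal"
  assumes [measurable]: "f \<in> borel_measurable borel" and c: "c \<noteq> 0"
  shows "(\<integral>\<^sup>+x. f x \<partial>lborel) = ennreal (\<bar>c\<bar> ^ DIM('a)) * (\<integral>\<^sup>+x. f (t + c *\<^sub>R x) \<partial>lborel)"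
  by (subst lborel_affine[OF c, of t])
     (simp add: nn_integral_density nn_integral_distr nn_integral_cmult)

lemma borel_measurable_uncurry_comp:
  fixes f g :: "'b \<Rightarrow> 'a::euclidean_space"
  assumes m: "(\<lambda>p. m (fst p) (snd p)) \<in> borel_measurable borel"
    and f: "f \<in> borel_measurable M" and g: "g \<in> borel_measurable M"
  shows "(\<lambda>x. m (f x) (g x) :: real) \<in> borel_measurable M"
proof -
  have "(\<lambda>x. (f x, g x)) \<in> measurable M borel"
    using measurable_Pair[OF f g] by (simp add: borel_prod)
  from measurable_compose[OF this m] show ?thesis by simp
qed

lemma measurable_nearest:
  fixes mu :: "'b \<Rightarrow> nat \<Rightarrow> 'a::euclidean_space"
  assumes m: "(\<lambda>p. m (fst p) (snd p)) \<in> borel_measurable borel"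
    and mu: "\<And>h. (\<lambda>x. mu x h) \<in> borel_measurable M"
    and K[measurable]: "K \<in> measurable M (count_space UNIV)"
    and f: "f \<in> borel_measurable M"
  shows "(\<lambda>x. nearest m (mu x) (K x) (f x)) \<in> measurable M (count_space UNIV)"
  unfolding nearest_def
proof (rule measurable_Least)
  fix h
  note [measurable] = borel_measurable_uncurry_comp[OF m f mu]
  show "Measurable.pred M (\<lambda>x. h < K x \<and> (\<forall>h'<K x. m (f x) (mu x h) \<le> m (f x) (mu x h')))"
    by measurable
qed

lemma borel_measurable_gmap:
  fixes mu :: "'b \<Rightarrow> nat \<Rightarrow> 'a::euclidean_space"
  assumes m: "(\<lambda>p. m (fst p) (snd p)) \<in> borel_measurable borel"
    and mu: "\<And>h. (\<lambda>x. mu x h) \<in> borel_measurable M"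
    and K: "K \<in> measurable M (count_space UNIV)"
    and f: "f \<in> borel_measurable M"
  shows "(\<lambda>x. gmap m (mu x) (K x) (f x) a b) \<in> borel_measurable M"
proof -
  have "(\<lambda>x. mu x (nearest m (mu x) (K x) (f x))) \<in> borel_measurable M"
    by (rule measurable_compose_countable[where f="\<lambda>h x. mu x h", OF mu measurable_nearest[OF m mu K f]])
  with f show ?thesis unfolding gmap_def Let_def by measurable
qed

lemma pred_inA:
  fixes mu :: "'b \<Rightarrow> nat \<Rightarrow> 'a::euclidean_space"
  assumes m: "(\<lambda>p. m (fst p) (snd p)) \<in> borel_measurable borel"
    and mu: "\<And>h. (\<lambda>x. mu x h) \<in> borel_measurable M"
    and K: "K \<in> measurable M (count_space UNIV)"
    and f: "f \<in> borel_measurable M"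
  shows "Measurable.pred M (\<lambda>x. inA m (mu x) (K x) a b (f x))"
proof -
  note [measurable] = measurable_nearest[OF m mu K f]
    measurable_nearest[OF m mu K borel_measurable_gmap[OF m mu K f]]
  have eq: "inA m (mu x) (K x) a b (f x) \<longleftrightarrow> (\<exists>h. nearest m (mu x) (K x) (gmap m (mu x) (K x) (f x) a b) = h
      \<and> nearest m (mu x) (K x) (f x) = h)" for x
    unfolding inA_def by auto
  show ?thesis unfolding eq by measurable
qed

lemma measurable_nearest_const:
  fixes mu :: "nat \<Rightarrow> 'a::euclidean_space"
  assumes "(\<lambda>p. m (fst p) (snd p)) \<in> borel_measurable borel"
  shows "nearest m mu K \<in> measurable borel (count_space UNIV)"
  by (rule measurable_nearest[OF assms, where mu="\<lambda>_. mu" and K="\<lambda>_. K" and f="\<lambda>x. x"]) auto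

lemma borel_measurable_gmap_const:
  fixes mu :: "nat \<Rightarrow> 'a::euclidean_space"
  assumes "(\<lambda>p. m (fst p) (snd p)) \<in> borel_measurable borel"
  shows "(\<lambda>u. gmap m mu K u a b) \<in> borel_measurable borel"
  by (rule borel_measurable_gmap[OF assms, where mu="\<lambda>_. mu" and K="\<lambda>_. K" and f="\<lambda>x. x"]) auto

lemma pred_inA_const:
  fixes mu :: "nat \<Rightarrow> 'a::euclidean_space"
  assumes "(\<lambda>p. m (fst p) (snd p)) \<in> borel_measurable borel"
  shows "Measurable.pred borel (inA m mu K a b)"
  by (rule pred_inA[OF assms, where mu="\<lambda>_. mu" and K="\<lambda>_. K" and f="\<lambda>x. x"]) auto

lemma nearest_less:
  assumes "1 \<le> K"
  shows "nearest m mu K x < K"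
proof -
  have "0 \<in> {..<K}"
    using assms by simp
  then have "finite {..<K}" "{..<K} \<noteq> {}"
    by blast+
  then obtain h where "h \<in> {..<K}" "\<not> (\<exists>h'\<in>{..<K}. m x (mu h') < m x (mu h))"
    using arg_min_if_finite[of "{..<K}" "\<lambda>h. m x (mu h)"] by blast
  then have "h < K \<and> (\<forall>h'<K. m x (mu h) \<le> m x (mu h'))"
    by (auto simp: not_less)
  then show ?thesis
    unfolding nearest_def by (rule LeastI2_wellorder) simp
qed

lemma gmap_eq:
  "nearest m mu K u = h \<Longrightarrow> gmap m mu K u a b = (a/b) powr (1/2) *\<^sub>R (u - mu h) + mu h"
  by (simp add: gmap_def Let_def)

lemma powr_half_mult_inverse:
  "0 < a \<Longrightarrow> 0 < b \<Longrightarrow> (b/a) powr (1/2) * (a/b) powr (1/2) = (1::real)"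
  by (simp add: powr_mult[symmetric])

lemma nearest_inA_rescale_iff:
  fixes mu :: "nat \<Rightarrow> 'a::euclidean_space"
  assumes a: "0 < a" and b: "0 < b"
    and w: "w = (a/b) powr (1/2) *\<^sub>R (u - mu h) + mu h"
  shows "nearest m mu K u = h \<and> inA m mu K a b u \<longleftrightarrow> nearest m mu K w = h \<and> inA m mu K b a w"
proof -
  have u: "u = (b/a) powr (1/2) *\<^sub>R (w - mu h) + mu h"
    using powr_half_mult_inverse[OF a b] by (simp add: w scaleR_scaleR)
  have gu: "nearest m mu K u = h \<Longrightarrow> gmap m mu K u a b = w"
    using gmap_eq[of m mu K u h a b] w by simp
  have gw: "nearest m mu K w = h \<Longrightarrow> gmap m mu K w b a = u"
    using gmap_eq[of m mu K w h b a] u by simp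
  show ?thesis
    using gu gw unfolding inA_def by auto
qed

lemma gmap_involution:
  fixes mu :: "nat \<Rightarrow> 'a::euclidean_space"
  assumes a: "0 < a" and b: "0 < b" and A: "inA m mu K a b u"
  shows "inA m mu K b a (gmap m mu K u a b) \<and> gmap m mu K (gmap m mu K u a b) b a = u"
proof -
  define h where "h = nearest m mu K u"
  define w where "w = gmap m mu K u a b"
  have w': "w = (a/b) powr (1/2) *\<^sub>R (u - mu h) + mu h"
    unfolding w_def by (rule gmap_eq) (simp add: h_def)
  have w_near: "nearest m mu K w = h" and w_in: "inA m mu K b a w"
    using nearest_inA_rescale_iff[where m=m and K=K and mu=mu and h=h, OF a b w'] A h_def by auto
  have "u = (b/a) powr (1/2) *\<^sub>R (w - mu h) + mu h"
    using powr_half_mult_inverse[OF a b] by (simp add: w' scaleR_scaleR)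
  then have "gmap m mu K w b a = u"
    using gmap_eq[OF w_near] by metis
  with w_in show ?thesis
    unfolding w_def by simp
qed

lemma nn_integral_nearest_partition:
  fixes mu :: "nat \<Rightarrow> 'a::euclidean_space" and f :: "'a \<Rightarrow> ennreal"
  assumes m: "(\<lambda>p. m (fst p) (snd p)) \<in> borel_measurable borel" and K: "1 \<le> K"
    and [measurable]: "Measurable.pred borel P" "f \<in> borel_measurable borel"
  shows "(\<integral>\<^sup>+u. indicator {u. P u} u * f u \<partial>lborel)
       = (\<Sum>h<K. \<integral>\<^sup>+u. indicator {u. nearest m mu K u = h \<and> P u} u * f u \<partial>lborel)"
proof -
  note [measurable] = measurable_nearest_const[OF m]
  have "(\<Sum>h<K. indicator {u. nearest m mu K u = h \<and> P u} u * f u)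
      = (\<Sum>h<K. if h = nearest m mu K u then indicator {u. P u} u * f u else 0)" for u
    by (intro sum.cong) (auto split: split_indicator)
  then have "(\<Sum>h<K. indicator {u. nearest m mu K u = h \<and> P u} u * f u) = indicator {u. P u} u * f u" for u
    using nearest_less[OF K, of m mu u] by simp
  then have "(\<integral>\<^sup>+u. indicator {u. P u} u * f u \<partial>lborel)
      = (\<integral>\<^sup>+u. (\<Sum>h<K. indicator {u. nearest m mu K u = h \<and> P u} u * f u) \<partial>lborel)"
    by simp
  also have "\<dots> = (\<Sum>h<K. \<integral>\<^sup>+u. indicator {u. nearest m mu K u = h \<and> P u} u * f u \<partial>lborel)"
    by (rule nn_integral_sum) measurable
  finally show ?thesis .
qed

lemma nn_integral_gmap_cluster:
  fixes mu :: "nat \<Rightarrow> 'a::euclidean_space" and G :: "'a \<Rightarrow> ennreal"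
  assumes m: "(\<lambda>p. m (fst p) (snd p)) \<in> borel_measurable borel"
    and a: "0 < a" and b: "0 < b" and G[measurable]: "G \<in> borel_measurable borel"
  shows "ennreal (((a/b) powr (1/2)) ^ DIM('a)) *
           (\<integral>\<^sup>+u. indicator {u. nearest m mu K u = h \<and> inA m mu K a b u} u * G (gmap m mu K u a b) \<partial>lborel)
       = (\<integral>\<^sup>+w. indicator {w. nearest m mu K w = h \<and> inA m mu K b a w} w * G w \<partial>lborel)"
proof -
  define t where "t = (a/b) powr (1/2)"
  note [measurable] = measurable_nearest_const[OF m] pred_inA_const[OF m]
  define Psi where "Psi w = indicator {w. nearest m mu K w = h \<and> inA m mu K b a w} w * G w" for w
  have [measurable]: "Psi \<in> borel_measurable borel"
    unfolding Psi_def by measurable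
  (* On the cluster of mu h, gmap is the dilation about mu h by the factor t. *)
  have "indicator {u. nearest m mu K u = h \<and> inA m mu K a b u} u * G (gmap m mu K u a b)
      = Psi ((mu h - t *\<^sub>R mu h) + t *\<^sub>R u)" for u
  proof -
    have w: "(mu h - t *\<^sub>R mu h) + t *\<^sub>R u = (a/b) powr (1/2) *\<^sub>R (u - mu h) + mu h"
      by (simp add: t_def scaleR_diff_right)
    show ?thesis
      using nearest_inA_rescale_iff[where m=m and K=K and mu=mu and h=h, OF a b w] gmap_eq[of m mu K u h a b]
      unfolding Psi_def by (auto simp: indicator_def w)
  qed
  moreover have "0 < t"
    using a b by (simp add: t_def)
  ultimately show ?thesis
    unfolding Psi_def[symmetric] t_def[symmetric]
    using nn_integral_lborel_affine[of Psi t "mu h - t *\<^sub>R mu h"] by simp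
qed

lemma nn_integral_gmap:
  fixes mu :: "nat \<Rightarrow> 'a::euclidean_space" and G :: "'a \<Rightarrow> ennreal"
  assumes m: "(\<lambda>p. m (fst p) (snd p)) \<in> borel_measurable borel"
    and K: "1 \<le> K" and a: "0 < a" and b: "0 < b"
    and G[measurable]: "G \<in> borel_measurable borel"
  shows "ennreal (((a/b) powr (1/2)) ^ DIM('a)) *
           (\<integral>\<^sup>+u. indicator {u. inA m mu K a b u} u * G (gmap m mu K u a b) \<partial>lborel)
       = (\<integral>\<^sup>+w. indicator {w. inA m mu K b a w} w * G w \<partial>lborel)"
proof -
  note [measurable] = borel_measurable_gmap_const[OF m] pred_inA_const[OF m]
  have "ennreal (((a/b) powr (1/2)) ^ DIM('a)) *
          (\<integral>\<^sup>+u. indicator {u. inA m mu K a b u} u * G (gmap m mu K u a b) \<partial>lborel)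
      = ennreal (((a/b) powr (1/2)) ^ DIM('a)) * (\<Sum>h<K. \<integral>\<^sup>+u.
          indicator {u. nearest m mu K u = h \<and> inA m mu K a b u} u * G (gmap m mu K u a b) \<partial>lborel)"
    by (subst nn_integral_nearest_partition[OF m K]) measurable
  also have "\<dots> = (\<Sum>h<K. \<integral>\<^sup>+w. indicator {w. nearest m mu K w = h \<and> inA m mu K b a w} w * G w \<partial>lborel)"
    by (simp add: sum_distrib_left nn_integral_gmap_cluster[OF m a b G])
  also have "\<dots> = (\<integral>\<^sup>+w. indicator {w. inA m mu K b a w} w * G w \<partial>lborel)"
    by (rule nn_integral_nearest_partition[OF m K, symmetric]) measurable
  finally show ?thesis .
qed

lemma nn_integral_gmap_pair:
  fixes mu :: "nat \<Rightarrow> 'a::euclidean_space" and H :: "'a \<Rightarrow> 'a \<Rightarrow> ennreal"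
  assumes m: "(\<lambda>p. m (fst p) (snd p)) \<in> borel_measurable borel"
    and K: "1 \<le> K" and a: "0 < a" and b: "0 < b"
    and H: "case_prod H \<in> borel_measurable (borel \<Otimes>\<^sub>M borel)"
  shows "(\<integral>\<^sup>+v. \<integral>\<^sup>+u. indicator {u. inA m mu K a b u} u * indicator {v. inA m mu K b a v} v
            * H (gmap m mu K u a b) (gmap m mu K v b a) \<partial>lborel \<partial>lborel)
       = (\<integral>\<^sup>+v. \<integral>\<^sup>+u. indicator {v. inA m mu K a b v} v * indicator {u. inA m mu K b a u} u
            * H u v \<partial>lborel \<partial>lborel)"
proof -
  let ?A = "\<lambda>a b. {u. inA m mu K a b u}"
  define s where "s = ennreal (((a/b) powr (1/2)) ^ DIM('a))"
  define s' where "s' = ennreal (((b/a) powr (1/2)) ^ DIM('a))"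
  have "s' * s = 1"
    using powr_half_mult_inverse[OF a b] a b
    by (simp add: s_def s'_def ennreal_mult''[symmetric] power_mult_distrib[symmetric])
  note [measurable] = borel_measurable_gmap_const[OF m] pred_inA_const[OF m]
  have H_left[measurable]: "(\<lambda>u. H u w) \<in> borel_measurable borel" for w
    using measurable_compose[OF measurable_Pair2'[of w borel borel] H] by simp
  define Phi where "Phi w = (\<integral>\<^sup>+u. indicator (?A b a) u * H u w \<partial>lborel)" for w
  have [measurable]: "Phi \<in> borel_measurable borel"
  proof -
    note H[measurable]
    have "(\<lambda>p. indicator (?A b a) (snd p) * case_prod H (snd p, fst p)) \<in> borel_measurable (borel \<Otimes>\<^sub>M lborel)"
      by measurable
    then have "(\<lambda>(w, u). indicator (?A b a) u * H u w) \<in> borel_measurable (borel \<Otimes>\<^sub>M lborel)"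
      by (simp add: case_prod_unfold)
    then show ?thesis
      unfolding Phi_def by (rule lborel.borel_measurable_nn_integral)
  qed
  have inner: "(\<integral>\<^sup>+u. indicator (?A a b) u * H (gmap m mu K u a b) w \<partial>lborel) = s' * Phi w" for w
    using arg_cong[OF nn_integral_gmap[OF m K a b H_left[of w]], of "\<lambda>z. s' * z"] \<open>s' * s = 1\<close>
    by (simp add: s_def Phi_def mult.assoc[symmetric])
  have "(\<integral>\<^sup>+v. \<integral>\<^sup>+u. indicator (?A a b) u * indicator (?A b a) v
            * H (gmap m mu K u a b) (gmap m mu K v b a) \<partial>lborel \<partial>lborel)
      = (\<integral>\<^sup>+v. indicator (?A b a) v * (s' * Phi (gmap m mu K v b a)) \<partial>lborel)"
    by (subst inner[symmetric], subst nn_integral_cmult[symmetric]) (auto simp: mult_ac)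
  also have "\<dots> = s' * (\<integral>\<^sup>+v. indicator (?A b a) v * Phi (gmap m mu K v b a) \<partial>lborel)"
    by (subst nn_integral_cmult[symmetric]) (auto simp: mult_ac)
  also have "\<dots> = (\<integral>\<^sup>+v. indicator (?A a b) v * Phi v \<partial>lborel)"
    unfolding s'_def by (rule nn_integral_gmap[OF m K b a]) measurable
  also have "\<dots> = (\<integral>\<^sup>+v. \<integral>\<^sup>+u. indicator (?A a b) v * indicator (?A b a) u * H u v \<partial>lborel \<partial>lborel)"
    unfolding Phi_def by (subst nn_integral_cmult[symmetric]) (auto simp: mult_ac)
  finally show ?thesis .
qed

section \<open>Swap moves on one replica\<close>

lemma product_nn_integral_insert2:
  fixes f :: "('i \<Rightarrow> 'a::euclidean_space) \<Rightarrow> ennreal"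
  assumes I: "finite I" "p \<in> I" "q \<in> I" "p \<noteq> q"
    and f: "f \<in> borel_measurable (PiM I (\<lambda>_. lborel))"
  shows "integral\<^sup>N (PiM I (\<lambda>_. lborel)) f
     = (\<integral>\<^sup>+x. \<integral>\<^sup>+v. \<integral>\<^sup>+u. f (x(q := v, p := u)) \<partial>lborel \<partial>lborel \<partial>PiM (I - {p} - {q}) (\<lambda>_. lborel))"
proof -
  interpret product_sigma_finite "\<lambda>_. lborel :: 'a measure" by standard
  have I1: "I = insert p (I - {p})" and I2: "I - {p} = insert q (I - {p} - {q})"
    using I by auto
  have f1: "f \<in> borel_measurable (PiM (insert p (I - {p})) (\<lambda>_. lborel))"
    using f I1 by simp
  have "integral\<^sup>N (PiM I (\<lambda>_. lborel)) f
      = (\<integral>\<^sup>+x. \<integral>\<^sup>+u. f (x(p := u)) \<partial>lborel \<partial>PiM (I - {p}) (\<lambda>_. lborel))"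
    by (subst I1, rule product_nn_integral_insert) (use I f1 in auto)
  also have "\<dots> = (\<integral>\<^sup>+x. \<integral>\<^sup>+v. \<integral>\<^sup>+u. f (x(q := v, p := u)) \<partial>lborel \<partial>lborel \<partial>PiM (I - {p} - {q}) (\<lambda>_. lborel))"
  proof (subst I2, rule product_nn_integral_insert)
    have "(\<lambda>(x, u). f (x(p := u))) \<in> borel_measurable (PiM (I - {p}) (\<lambda>_. lborel) \<Otimes>\<^sub>M lborel)"
      using measurable_compose[OF measurable_add_dim f1] by (simp add: case_prod_unfold)
    then show "(\<lambda>x. \<integral>\<^sup>+ u. f (x(p := u)) \<partial>lborel) \<in> borel_measurable (PiM (insert q (I - {p} - {q})) (\<lambda>_. lborel))"
      unfolding I2[symmetric] by (rule lborel.borel_measurable_nn_integral)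
  qed (use I in auto)
  finally show ?thesis .
qed

lemma finite_cfg_index: "finite (cfg_index N n)"
  by (simp add: cfg_index_def)

lemma mult_min_one_divide:
  fixes D E R :: real
  assumes "0 \<le> D" "0 \<le> E" "0 \<le> R"
  shows "D * R * min 1 (E / D) = min (D * R) (E * R)"
proof (cases "D = 0")
  case False
  then have "D * min 1 (E / D) = min D E"
    using assms by (simp add: min_def field_simps)
  then show ?thesis
    using assms by (metis min_mult_distrib_right mult.commute mult.left_commute)
qed (use assms in simp)

locale swap_row =
  fixes \<pi> :: "'a::euclidean_space \<Rightarrow> real" and m :: "'a \<Rightarrow> 'a \<Rightarrow> real" and \<beta> :: "nat \<Rightarrow> real"
    and N n :: nat
    and mufun :: "(nat \<times> nat \<Rightarrow> 'a) \<Rightarrow> nat \<Rightarrow> 'a" and Kfun :: "(nat \<times> nat \<Rightarrow> 'a) \<Rightarrow> nat"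
    and i :: nat
  assumes pi_meas: "\<pi> \<in> borel_measurable borel"
    and pi_nonneg: "\<And>x. 0 \<le> \<pi> x"
    and m_meas: "(\<lambda>p. m (fst p) (snd p)) \<in> borel_measurable borel"
    and beta_pos: "\<And>j. j \<le> n \<Longrightarrow> 0 < \<beta> j"
    and n_pos: "1 \<le> n"
    and i_range: "1 \<le> i" "i \<le> N"
    and mu_meas: "\<And>h. (\<lambda>x. mufun x h) \<in> borel_measurable (cfg_space N n)"
    and K_meas: "Kfun \<in> measurable (cfg_space N n) (count_space UNIV)"
    and K_pos: "\<And>x. x \<in> space (cfg_space N n) \<Longrightarrow> 1 \<le> Kfun x"
    and centres_ignore_row: "\<And>x y. x \<in> space (cfg_space N n) \<Longrightarrow> y \<in> space (cfg_space N n) \<Longrightarrow>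
       (\<And>p. p \<in> cfg_index N n \<Longrightarrow> fst p \<noteq> i \<Longrightarrow> x p = y p) \<Longrightarrow>
       mufun x = mufun y \<and> Kfun x = Kfun y"
begin

abbreviation M :: "(nat \<times> nat \<Rightarrow> 'a) measure" where
  "M \<equiv> cfg_space N n"

abbreviation unnorm :: "(nat \<times> nat \<Rightarrow> 'a) \<Rightarrow> real" where
  "unnorm \<equiv> unnorm_piQ \<pi> \<beta> N n"

abbreviation row_kernel :: "(nat \<times> nat \<Rightarrow> 'a) \<Rightarrow> (nat \<times> nat \<Rightarrow> 'a) measure" where
  "row_kernel \<equiv> swap_row_kernel \<pi> m mufun Kfun \<beta> N n i"

definition sw :: "nat \<Rightarrow> (nat \<times> nat \<Rightarrow> 'a) \<Rightarrow> nat \<times> nat \<Rightarrow> 'a" where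
  "sw l x = swap_prop m (mufun x) (Kfun x) \<beta> i l x"

definition adm :: "nat \<Rightarrow> (nat \<times> nat \<Rightarrow> 'a) \<Rightarrow> bool" where
  "adm l x \<longleftrightarrow> inA m (mufun x) (Kfun x) (\<beta> l) (\<beta> (Suc l)) (x (i, l))
              \<and> inA m (mufun x) (Kfun x) (\<beta> (Suc l)) (\<beta> l) (x (i, Suc l))"

definition acc :: "nat \<Rightarrow> (nat \<times> nat \<Rightarrow> 'a) \<Rightarrow> real" where
  "acc l x = swap_acc \<pi> m (mufun x) (Kfun x) \<beta> i l x"

lemma row_index: "l < n \<Longrightarrow> (i, l) \<in> cfg_index N n" "l < n \<Longrightarrow> (i, Suc l) \<in> cfg_index N n"
  using i_range by (auto simp: cfg_index_def)

lemma space_ne: "space M \<noteq> {}"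
  by (simp add: cfg_space_def space_PiM PiE_eq_empty_iff)

lemma measurable_component: "j \<in> cfg_index N n \<Longrightarrow> (\<lambda>x. x j) \<in> borel_measurable M"
  unfolding cfg_space_def by simp

lemma gmap_component_measurable:
  "j \<in> cfg_index N n \<Longrightarrow> (\<lambda>x. gmap m (mufun x) (Kfun x) (x j) a b) \<in> borel_measurable M"
  by (rule borel_measurable_gmap[OF m_meas mu_meas K_meas measurable_component])

lemma sw_measurable:
  assumes l: "l < n"
  shows "sw l \<in> M \<rightarrow>\<^sub>M M"
  unfolding sw_def[abs_def] swap_prop_def cfg_space_def
  by (rule measurable_fun_upd[where J="cfg_index N n",
        OF _ measurable_fun_upd[where J="cfg_index N n", OF _ measurable_ident_sets]])
     (use gmap_component_measurable row_index[OF l] in \<open>auto simp: cfg_space_def\<close>)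

lemma inA_component_pred:
  "j \<in> cfg_index N n \<Longrightarrow> Measurable.pred M (\<lambda>x. inA m (mufun x) (Kfun x) a b (x j))"
  by (rule pred_inA[OF m_meas mu_meas K_meas measurable_component])

lemma adm_pred: "l < n \<Longrightarrow> Measurable.pred M (adm l)"
  unfolding adm_def[abs_def] by (intro pred_intros_logic inA_component_pred row_index)

lemma acc_measurable:
  assumes l: "l < n"
  shows "acc l \<in> borel_measurable M"
proof -
  note idx = row_index[OF l]
  note [measurable] = pi_meas measurable_component[OF idx(1)] measurable_component[OF idx(2)]
    gmap_component_measurable[OF idx(1)] gmap_component_measurable[OF idx(2)]
    inA_component_pred[OF idx(1)] inA_component_pred[OF idx(2)]
  show ?thesis
    unfolding acc_def[abs_def] swap_acc_def by measurable
qed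

lemma unnorm_measurable: "unnorm \<in> borel_measurable M"
  unfolding unnorm_piQ_def
proof (rule borel_measurable_prod)
  fix j assume j: "j \<in> cfg_index N n"
  note [measurable] = measurable_component[OF j] pi_meas
  show "(\<lambda>x. \<pi> (x j) powr \<beta> (snd j)) \<in> borel_measurable M"
    by measurable
qed

lemma sw_centres:
  assumes x: "x \<in> space M" and l: "l < n"
  shows "mufun (sw l x) = mufun x \<and> Kfun (sw l x) = Kfun x"
  by (rule centres_ignore_row[OF measurable_space[OF sw_measurable[OF l] x] x])
     (auto simp: sw_def swap_prop_def)

lemma sw_involution:
  assumes x: "x \<in> space M" and l: "l < n" and adm: "adm l x"
  shows "adm l (sw l x) \<and> sw l (sw l x) = x"
proof -
  have ab: "0 < \<beta> l" "0 < \<beta> (Suc l)"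
    using beta_pos l by auto
  note centres = sw_centres[OF x l]
  let ?mu = "mufun x" and ?K = "Kfun x"
  have A1: "inA m ?mu ?K (\<beta> l) (\<beta> (Suc l)) (x (i, l))"
    and A2: "inA m ?mu ?K (\<beta> (Suc l)) (\<beta> l) (x (i, Suc l))"
    using adm unfolding adm_def by auto
  note G1 = gmap_involution[OF ab A1] and G2 = gmap_involution[OF ab(2) ab(1) A2]
  show ?thesis
    using G1 G2 centres unfolding adm_def sw_def[of l "sw l x"] swap_prop_def
    by (auto simp: sw_def swap_prop_def)
qed

lemma acc_range: "0 \<le> acc l x \<and> acc l x \<le> 1"
  unfolding acc_def swap_acc_def using pi_nonneg by (simp add: divide_nonneg_nonneg)

lemma acc_rejected: "\<not> adm l x \<Longrightarrow> acc l x = 0"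
  unfolding acc_def swap_acc_def adm_def by auto

lemma unnorm_mult_acc:
  assumes l: "l < n"
  shows "unnorm x * acc l x = (if adm l x then min (unnorm x) (unnorm (sw l x)) else 0)"
proof -
  define p q where "p = (i, l)" and "q = (i, Suc l)"
  have pq: "p \<in> cfg_index N n" "q \<in> cfg_index N n" "p \<noteq> q"
    using row_index[OF l] by (auto simp: p_def q_def)
  define f where "f y r = \<pi> (y r) powr \<beta> (snd r)" for y :: "nat \<times> nat \<Rightarrow> 'a" and r
  define R where "R y = (\<Prod>r\<in>cfg_index N n - {p} - {q}. f y r)" for y
  have factor: "unnorm y = f y p * f y q * R y" for y
  proof -
    have "unnorm y = f y p * (\<Prod>r\<in>cfg_index N n - {p}. f y r)"
      unfolding unnorm_piQ_def f_def by (rule prod.remove[OF finite_cfg_index pq(1)])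
    also have "(\<Prod>r\<in>cfg_index N n - {p}. f y r) = f y q * R y"
      unfolding R_def by (rule prod.remove) (use finite_cfg_index pq in auto)
    finally show ?thesis
      by (simp add: mult.assoc)
  qed
  have sw_eq: "sw l x = x(q := gmap m (mufun x) (Kfun x) (x p) (\<beta> l) (\<beta> (Suc l)),
          p := gmap m (mufun x) (Kfun x) (x q) (\<beta> (Suc l)) (\<beta> l))"
    unfolding sw_def swap_prop_def p_def q_def ..
  have R_sw: "R (sw l x) = R x"
    unfolding R_def f_def sw_eq by (intro prod.cong) auto
  define D E where "D = f x p * f x q" and "E = f (sw l x) p * f (sw l x) q"
  have "0 \<le> D" "0 \<le> E" "0 \<le> R x"
    unfolding D_def E_def R_def f_def using pi_nonneg by (auto intro!: prod_nonneg)
  moreover have "acc l x = min 1 (E / D * (if adm l x then 1 else 0))"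
    unfolding acc_def swap_acc_def D_def E_def adm_def f_def sw_eq
    using pq(3) by (simp add: p_def q_def mult.commute)
  ultimately show ?thesis
    by (simp add: factor R_sw mult_min_one_divide flip: D_def E_def)
qed

lemma detailed_balance:
  assumes x: "x \<in> space M" and l: "l < n" and adm: "adm l x"
  shows "unnorm (sw l x) * acc l (sw l x) = unnorm x * acc l x"
  using unnorm_mult_acc[OF l, of x] unnorm_mult_acc[OF l, of "sw l x"] sw_involution[OF x l adm] adm
  by (simp add: min.commute)

lemma nn_integral_sw_fibre:
  assumes l: "l < n" and F: "F \<in> borel_measurable M"
    and x: "x \<in> space (PiM (cfg_index N n - {(i, l)} - {(i, Suc l)}) (\<lambda>_. lborel))"
  shows "(\<integral>\<^sup>+v. \<integral>\<^sup>+u. indicator {x. adm l x} (x((i, Suc l) := v, (i, l) := u))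
            * F (sw l (x((i, Suc l) := v, (i, l) := u))) \<partial>lborel \<partial>lborel)
       = (\<integral>\<^sup>+u. \<integral>\<^sup>+v. indicator {x. adm l x} (x((i, l) := u, (i, Suc l) := v))
            * F (x((i, l) := u, (i, Suc l) := v)) \<partial>lborel \<partial>lborel)"
proof -
  let ?p = "(i, l)" and ?q = "(i, Suc l)"
  define a b where "a = \<beta> l" and "b = \<beta> (Suc l)"
  have ab: "0 < a" "0 < b"
    using beta_pos l by (auto simp: a_def b_def)
  have x_upd: "x(?q := v, ?p := u) \<in> space M" for u v
    using x row_index[OF l] by (auto simp: cfg_space_def space_PiM PiE_def extensional_def)
  (* Only row i varies on this fibre, so the centres are constant on it. *)
  define mu K where "mu = mufun (x(?q := 0, ?p := 0))" and "K = Kfun (x(?q := 0, ?p := 0))"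
  have centres: "mufun (x(?q := v, ?p := u)) = mu \<and> Kfun (x(?q := v, ?p := u)) = K" for u v
    unfolding mu_def K_def by (rule centres_ignore_row[OF x_upd x_upd]) auto
  have K: "1 \<le> K"
    unfolding K_def by (rule K_pos[OF x_upd])
  have sw_upd: "sw l (x(?q := v, ?p := u)) = x(?q := gmap m mu K u a b, ?p := gmap m mu K v b a)" for u v
    using centres[of v u] unfolding sw_def swap_prop_def
    by (intro ext) (simp add: a_def b_def)
  have adm_upd: "adm l (x(?q := v, ?p := u)) \<longleftrightarrow> inA m mu K a b u \<and> inA m mu K b a v" for u v
    using centres[of v u] unfolding adm_def by (simp add: a_def b_def)
  define H where "H s t = F (x(?q := s, ?p := t))" for s t
  have "(\<lambda>w. x(?q := fst w, ?p := snd w)) \<in> (borel \<Otimes>\<^sub>M borel) \<rightarrow>\<^sub>M M"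
    unfolding cfg_space_def
    by (rule measurable_fun_upd[OF _ measurable_fun_upd[OF _ measurable_const[OF x]]])
       (use row_index[OF l] in auto)
  then have H: "case_prod H \<in> borel_measurable (borel \<Otimes>\<^sub>M borel)"
    unfolding H_def case_prod_unfold by (rule measurable_compose) (rule F)
  have "(\<integral>\<^sup>+v. \<integral>\<^sup>+u. indicator {x. adm l x} (x(?q := v, ?p := u)) * F (sw l (x(?q := v, ?p := u)))
          \<partial>lborel \<partial>lborel)
      = (\<integral>\<^sup>+v. \<integral>\<^sup>+u. indicator {u. inA m mu K a b u} u * indicator {v. inA m mu K b a v} v
          * H (gmap m mu K u a b) (gmap m mu K v b a) \<partial>lborel \<partial>lborel)"
    by (intro nn_integral_cong) (simp add: sw_upd adm_upd H_def split: split_indicator)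
  also have "\<dots> = (\<integral>\<^sup>+v. \<integral>\<^sup>+u. indicator {v. inA m mu K a b v} v * indicator {u. inA m mu K b a u} u
          * H u v \<partial>lborel \<partial>lborel)"
    by (rule nn_integral_gmap_pair[OF m_meas K ab H])
  also have "\<dots> = (\<integral>\<^sup>+u. \<integral>\<^sup>+v. indicator {x. adm l x} (x(?p := u, ?q := v)) * F (x(?p := u, ?q := v))
          \<partial>lborel \<partial>lborel)"
    using fun_upd_twist[of ?p ?q x]
    by (intro nn_integral_cong) (simp add: adm_upd H_def split: split_indicator)
  finally show ?thesis .
qed

lemma nn_integral_sw:
  assumes l: "l < n" and F[measurable]: "F \<in> borel_measurable M"
  shows "(\<integral>\<^sup>+x. indicator {x. adm l x} x * F (sw l x) \<partial>M) = (\<integral>\<^sup>+x. indicator {x. adm l x} x * F x \<partial>M)"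
proof -
  let ?p = "(i, l)" and ?q = "(i, Suc l)"
  have pq: "?p \<in> cfg_index N n" "?q \<in> cfg_index N n" "?p \<noteq> ?q"
    using row_index[OF l] by auto
  note [measurable] = sw_measurable[OF l] adm_pred[OF l]
  have "(\<integral>\<^sup>+x. indicator {x. adm l x} x * F (sw l x) \<partial>M)
      = (\<integral>\<^sup>+x. \<integral>\<^sup>+v. \<integral>\<^sup>+u. indicator {x. adm l x} (x(?q := v, ?p := u)) * F (sw l (x(?q := v, ?p := u)))
          \<partial>lborel \<partial>lborel \<partial>PiM (cfg_index N n - {?p} - {?q}) (\<lambda>_. lborel))"
    unfolding cfg_space_def
    by (rule product_nn_integral_insert2[OF finite_cfg_index pq]) (simp flip: cfg_space_def)
  also have "\<dots> = (\<integral>\<^sup>+x. \<integral>\<^sup>+u. \<integral>\<^sup>+v. indicator {x. adm l x} (x(?p := u, ?q := v)) * F (x(?p := u, ?q := v))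
          \<partial>lborel \<partial>lborel \<partial>PiM (cfg_index N n - {?p} - {?q}) (\<lambda>_. lborel))"
    by (intro nn_integral_cong nn_integral_sw_fibre[OF l F])
  also have "\<dots> = (\<integral>\<^sup>+x. indicator {x. adm l x} x * F x \<partial>M)"
  proof -
    have swap_order: "cfg_index N n - {?p} - {?q} = cfg_index N n - {?q} - {?p}"
      by auto
    show ?thesis
      unfolding cfg_space_def swap_order
      by (rule product_nn_integral_insert2[OF finite_cfg_index pq(2,1) pq(3)[symmetric], symmetric])
         (simp flip: cfg_space_def)
  qed
  finally show ?thesis .
qed

definition move_prob :: "nat \<Rightarrow> (nat \<times> nat \<Rightarrow> 'a) \<Rightarrow> (nat \<times> nat \<Rightarrow> 'a) set \<Rightarrow> ennreal" where
  "move_prob l x A = indicator A (sw l x) * ennreal (acc l x) + indicator A x * ennreal (1 - acc l x)"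

lemma move_prob_measurable:
  assumes l: "l < n" and A[measurable]: "A \<in> sets M"
  shows "(\<lambda>x. move_prob l x A) \<in> borel_measurable M"
proof -
  note [measurable] = sw_measurable[OF l] acc_measurable[OF l]
  show ?thesis
    unfolding move_prob_def by measurable
qed

lemma emeasure_row_kernel:
  assumes A: "A \<in> sets M"
  shows "emeasure (row_kernel x) A
    = (\<Sum>l<n. move_prob l x A) / of_nat n"
proof -
  have "0 \<in> {..<n}"
    using n_pos by simp
  then have ne: "{..<n} \<noteq> {}"
    by blast
  have "emeasure (row_kernel x) A
      = (\<integral>\<^sup>+y. indicator A y \<partial>measure_pmf (bind_pmf (pmf_of_set {..<n})
          (\<lambda>l. map_pmf (\<lambda>b. if b then sw l x else x) (bernoulli_pmf (acc l x)))))"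
    unfolding swap_row_kernel_def sw_def[abs_def] acc_def[abs_def] emeasure_distr_measure_pmf_id[OF A]
    by (rule nn_integral_indicator[symmetric]) simp
  also have "\<dots> = (\<Sum>l<n. \<integral>\<^sup>+y. indicator A y
      \<partial>measure_pmf (map_pmf (\<lambda>b. if b then sw l x else x) (bernoulli_pmf (acc l x)))) / of_nat n"
    unfolding nn_integral_bind_pmf by (subst nn_integral_pmf_of_set[OF ne]) simp_all
  also have "\<dots> = (\<Sum>l<n. move_prob l x A) / of_nat n"
    using acc_range by (simp add: move_prob_def)
  finally show ?thesis .
qed

lemma row_kernel_measurable: "row_kernel \<in> M \<rightarrow>\<^sub>M subprob_algebra M"
proof (rule measurable_subprob_algebra)
  fix x assume x: "x \<in> space M"
  show "sets (row_kernel x) = sets M"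
    unfolding swap_row_kernel_def by simp
  have space: "space (row_kernel x) = space M"
    unfolding swap_row_kernel_def by simp
  have "emeasure (row_kernel x) (space M) \<le> 1"
    unfolding swap_row_kernel_def emeasure_distr_measure_pmf_id[OF sets.top]
    by (rule measure_pmf.emeasure_le_1)
  then show "subprob_space (row_kernel x)"
    by (intro subprob_spaceI) (simp_all add: space space_ne)
next
  fix A assume A[measurable]: "A \<in> sets M"
  have [measurable]: "(\<lambda>x. move_prob l x A) \<in> borel_measurable M" if "l \<in> {..<n}" for l
    using move_prob_measurable[OF _ A] that by simp
  show "(\<lambda>x. emeasure (row_kernel x) A) \<in> borel_measurable M"
    by (subst measurable_cong[OF emeasure_row_kernel[OF A]]) measurable
qed

definition dens :: "(nat \<times> nat \<Rightarrow> 'a) \<Rightarrow> ennreal" where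
  "dens x = ennreal (unnorm x) / (\<integral>\<^sup>+y. ennreal (unnorm y) \<partial>M)"

lemma piQ_eq_density: "piQ \<pi> \<beta> N n = density M dens"
  by (simp add: piQ_def dens_def[abs_def])

lemma dens_measurable: "dens \<in> borel_measurable M"
  unfolding dens_def[abs_def] using unnorm_measurable by measurable

lemma nn_integral_dens_move_prob:
  assumes A: "A \<in> sets M" and l: "l < n"
  shows "(\<integral>\<^sup>+x. dens x * move_prob l x A \<partial>M) = emeasure (density M dens) A"
proof -
  have flux: "dens x * ennreal (acc l x) = ennreal (unnorm x * acc l x) / (\<integral>\<^sup>+y. ennreal (unnorm y) \<partial>M)" for x
    unfolding dens_def using pi_nonneg acc_range
    by (simp add: unnorm_piQ_def prod_nonneg ennreal_mult divide_ennreal_def mult_ac)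
  show ?thesis
    unfolding move_prob_def
    by (rule metropolis_step_preserves_density[OF sw_measurable[OF l] adm_pred[OF l] acc_measurable[OF l]
          dens_measurable A])
       (simp_all add: acc_range acc_rejected flux detailed_balance nn_integral_sw l)
qed

lemma invariant_row_kernel: "invariant_kernel (piQ \<pi> \<beta> N n) M row_kernel"
proof -
  have kernel: "row_kernel \<in> density M dens \<rightarrow>\<^sub>M subprob_algebra M"
    using row_kernel_measurable by (simp cong: measurable_cong_sets)
  have sets: "sets (density M dens \<bind> row_kernel) = sets M"
    by (rule sets_bind) (simp_all add: swap_row_kernel_def space_ne)
  have "density M dens \<bind> row_kernel = density M dens"
  proof (rule measure_eqI)
    fix A assume "A \<in> sets (density M dens \<bind> row_kernel)"
    then have A: "A \<in> sets M"
      using sets by simp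
    note [measurable] = A dens_measurable
    have "emeasure (density M dens \<bind> row_kernel) A = (\<integral>\<^sup>+x. dens x * emeasure (row_kernel x) A \<partial>M)"
      using measurable_emeasure_subprob_algebra[OF A] row_kernel_measurable
      by (simp add: emeasure_bind[OF _ kernel A] nn_integral_density space_ne)
    also have "\<dots> = (\<integral>\<^sup>+x. (\<Sum>l<n. dens x * move_prob l x A) / of_nat n \<partial>M)"
      by (intro nn_integral_cong) (simp add: emeasure_row_kernel A ennreal_times_divide sum_distrib_left)
    also have "\<dots> = (\<integral>\<^sup>+x. (\<Sum>l<n. dens x * move_prob l x A) \<partial>M) / of_nat n"
      using move_prob_measurable[OF _ A] by (intro nn_integral_divide borel_measurable_sum) auto
    also have "\<dots> = (\<Sum>l<n. \<integral>\<^sup>+x. dens x * move_prob l x A \<partial>M) / of_nat n"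
      using move_prob_measurable[OF _ A] by (subst nn_integral_sum) auto
    also have "\<dots> = of_nat n * emeasure (density M dens) A / of_nat n"
      by (simp add: nn_integral_dens_move_prob A)
    also have "\<dots> = emeasure (density M dens) A"
      using n_pos by (subst mult.commute) (simp add: ennreal_mult_divide_eq)
    finally show "emeasure (density M dens \<bind> row_kernel) A = emeasure (density M dens) A" .
  qed (simp add: sets)
  then show ?thesis
    unfolding invariant_kernel_def piQ_eq_density using row_kernel_measurable by simp
qed

end

lemma invariant_kernel_quanta_phase:
  assumes "\<And>i. i \<in> set row_list \<Longrightarrow> swap_row \<pi> m \<beta> N n mufun Kfun i"
  shows "invariant_kernel (piQ \<pi> \<beta> N n) (cfg_space N n) (quanta_phase \<pi> m mufun Kfun \<beta> N n row_list)"
  unfolding quanta_phase_def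
proof (rule invariant_kernel_kseq)
  show "sets (piQ \<pi> \<beta> N n) = sets (cfg_space N n)"
    by (simp add: piQ_def)
qed (auto intro!: swap_row.invariant_row_kernel assms)

lemma decreasing_upto_le:
  fixes f :: "nat \<Rightarrow> 'b::linorder"
  assumes dec: "\<And>j. j < n \<Longrightarrow> f (Suc j) < f j" and "j \<le> n"
  shows "f n \<le> f j"
  using \<open>j \<le> n\<close>
proof (induction rule: inc_induct)
  case (step j)
  then show ?case
    using dec[of j] by simp
qed simp

theorem proposition2:
  fixes \<pi> :: "'a::euclidean_space \<Rightarrow> real"
    and \<beta> :: "nat \<Rightarrow> real"
    and N n k T :: nat
    and m :: "'a \<Rightarrow> 'a \<Rightarrow> real"
    and mu1 mu2 :: "(nat \<times> nat \<Rightarrow> 'a) \<Rightarrow> nat \<Rightarrow> 'a"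
    and K1 K2 :: "(nat \<times> nat \<Rightarrow> 'a) \<Rightarrow> nat"
    and P1 :: "(nat \<times> nat \<Rightarrow> 'a) \<Rightarrow> (nat \<times> nat \<Rightarrow> 'a) measure"
  assumes pi_meas: "\<pi> \<in> borel_measurable lborel"
    and pi_nonneg: "\<And>x. 0 \<le> \<pi> x"
    and pi_dens: "(\<integral>\<^sup>+ x. ennreal (\<pi> x) \<partial>lborel) = 1"
    and n_pos: "1 \<le> n"
    and beta0: "\<beta> 0 = 1"
    and beta_dec: "\<And>j. j < n \<Longrightarrow> \<beta> (Suc j) < \<beta> j"
    and beta_pos: "0 < \<beta> n"
    and N2: "2 \<le> N"
    and piQ_fin: "(\<integral>\<^sup>+ y. ennreal (unnorm_piQ \<pi> \<beta> N n y) \<partial>cfg_space N n) < \<infinity>"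
    and m_metric: "\<And>x y. m x y = 0 \<longleftrightarrow> x = y" "\<And>x y. m x y = m y x"
                  "\<And>x y z. m x z \<le> m x y + m y z"
    and m_meas: "(\<lambda>p. m (fst p) (snd p)) \<in> borel_measurable borel"
    and mu1_meas: "\<And>h. (\<lambda>x. mu1 x h) \<in> borel_measurable (cfg_space N n)"
    and K1_meas: "K1 \<in> measurable (cfg_space N n) (count_space UNIV)"
    and K1_pos: "\<And>x. x \<in> space (cfg_space N n) \<Longrightarrow> 1 \<le> K1 x"
    and mu1_C1: "\<And>x y. x \<in> space (cfg_space N n) \<Longrightarrow> y \<in> space (cfg_space N n) \<Longrightarrow>
        (\<forall>i j. i \<le> N div 2 \<and> (i, j) \<in> cfg_index N n \<longrightarrow> x (i, j) = y (i, j)) \<Longrightarrow>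
        mu1 x = mu1 y \<and> K1 x = K1 y"
    and mu2_meas: "\<And>h. (\<lambda>x. mu2 x h) \<in> borel_measurable (cfg_space N n)"
    and K2_meas: "K2 \<in> measurable (cfg_space N n) (count_space UNIV)"
    and K2_pos: "\<And>x. x \<in> space (cfg_space N n) \<Longrightarrow> 1 \<le> K2 x"
    and mu2_C2: "\<And>x y. x \<in> space (cfg_space N n) \<Longrightarrow> y \<in> space (cfg_space N n) \<Longrightarrow>
        (\<forall>i j. N div 2 < i \<and> (i, j) \<in> cfg_index N n \<longrightarrow> x (i, j) = y (i, j)) \<Longrightarrow>
        mu2 x = mu2 y \<and> K2 x = K2 y"
    and P1_kernel: "P1 \<in> measurable (cfg_space N n) (prob_algebra (cfg_space N n))"
    and P1_inv: "piQ \<pi> \<beta> N n \<bind> P1 = piQ \<pi> \<beta> N n"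
    and k_pos: "1 \<le> k"
    and T_pos: "1 \<le> T"
  shows "piQ \<pi> \<beta> N n \<bind>
           kpow (cfg_space N n)
             (\<lambda>x. kpow (cfg_space N n) P1 k x \<bind> quanta_P2 \<pi> m mu1 K1 mu2 K2 \<beta> N n) T
         = piQ \<pi> \<beta> N n"
proof -
  let ?Q = "piQ \<pi> \<beta> N n" and ?S = "cfg_space N n"
  have beta_pos: "0 < \<beta> j" if "j \<le> n" for j
    using decreasing_upto_le[of n \<beta>, OF beta_dec that] \<open>0 < \<beta> n\<close> by simp
  have pi_borel: "\<pi> \<in> borel_measurable borel"
    using pi_meas by simp
  have phase1: "invariant_kernel ?Q ?S (quanta_phase \<pi> m mu1 K1 \<beta> N n [N div 2 + 1 ..< N + 1])"
    by (intro invariant_kernel_quanta_phase swap_row.intro mu1_C1)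
       (use n_pos K1_pos in \<open>auto simp: pi_borel pi_nonneg m_meas beta_pos mu1_meas K1_meas\<close>)
  have phase2: "invariant_kernel ?Q ?S (quanta_phase \<pi> m mu2 K2 \<beta> N n [1 ..< N div 2 + 1])"
    by (intro invariant_kernel_quanta_phase swap_row.intro mu2_C2)
       (use n_pos K2_pos in \<open>auto simp: pi_borel pi_nonneg m_meas beta_pos mu2_meas K2_meas\<close>)
  have sets: "sets ?Q = sets ?S"
    by (simp add: piQ_def)
  have "invariant_kernel ?Q ?S P1"
    unfolding invariant_kernel_def using measurable_prob_algebraD[OF P1_kernel] P1_inv by simp
  moreover have "invariant_kernel ?Q ?S (quanta_P2 \<pi> m mu1 K1 mu2 K2 \<beta> N n)"
    unfolding quanta_P2_def by (rule invariant_kernel_bind[OF sets phase1 phase2])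
  ultimately have "invariant_kernel ?Q ?S
      (kpow ?S (\<lambda>x. kpow ?S P1 k x \<bind> quanta_P2 \<pi> m mu1 K1 mu2 K2 \<beta> N n) T)"
    by (intro invariant_kernel_kpow invariant_kernel_bind sets)
  then show ?thesis
    unfolding invariant_kernel_def by simp
qed

end
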